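(* Let $d\ge2$, $\Lambda_1,\ldots,\Lambda_d\in\mathcal{M}_2$ and let $C$ be a $d$-copula which is negatively quadrant dependent, i.e. $C(\mathbf{u})\le\Pi(\mathbf{u}):=\prod_{i=1}^du_i$ for all $\mathbf{u}\in[0,1]^d$. Then for every $k=1,\ldots,d$ and $\mathbf{w}\in\mathbb{R}_+^d$, $$\phi_C(\Lambda_1,\ldots,\Lambda_d)(\mathbf{w})\le\phi_\Pi(\Lambda_1,\ldots,\Lambda_d)(\mathbf{w})\le\min_{m\in\{1,\ldots,d\},\,m\neq k}\Lambda_k(w_m,w_k).$$
   Context: A $d$-copula is a distribution function on $[0,1]^d$ with uniform margins. $\mathcal{M}_2$ is the set of bivariate tail dependence functions $\Lambda(\mathbf{w};D)=\lim_{s\searrow0}D(s\mathbf{w})/s$ of $2$-copulas $D$ (defined on $\mathbb{R}_+^2$, $\mathbb{R}_+=[0,\infty)$); they are $1$-Lipschitz and concave with a.e. partial derivatives in $[0,1]$. For a $d$-copula $C$, $\phi_C(\Lambda_1,\ldots,\Lambda_d)(w_1,\ldots,w_d):=\int_0^\infty C(\partial_1\Lambda_1(t,w_1),\ldots,\partial_1\Lambda_d(t,w_d))\,dt$. *)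

theory Defs
  imports "HOL-Probability.Probability"
begin

text \<open>Points of [0,1]^d / R_+^d are represented as functions nat => real; only the
coordinates 0..d-1 are relevant (0-based indexing).\<close>

definition copula :: "nat \<Rightarrow> ((nat \<Rightarrow> real) \<Rightarrow> real) \<Rightarrow> bool" where
  "copula d C \<longleftrightarrow>
     (\<exists>M. prob_space M \<and> sets M = sets (PiM {..<d} (\<lambda>_. (borel :: real measure))) \<and>
          (\<forall>i<d. \<forall>t\<in>{0..1}. measure M {x \<in> space M. x i \<le> t} = t) \<and>
          (\<forall>u. (\<forall>i<d. u i \<in> {0..1}) \<longrightarrow>
                C u = measure M {x \<in> space M. \<forall>i<d. x i \<le> u i}))"

definition indep_copula :: "nat \<Rightarrow> (nat \<Rightarrow> real) \<Rightarrow> real" where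
  "indep_copula d u = (\<Prod>i<d. u i)"

definition is_tdf_of :: "(real \<Rightarrow> real \<Rightarrow> real) \<Rightarrow> ((nat \<Rightarrow> real) \<Rightarrow> real) \<Rightarrow> bool" where
  "is_tdf_of L D \<longleftrightarrow>
     (\<forall>w1 w2. w1 \<ge> 0 \<longrightarrow> w2 \<ge> 0 \<longrightarrow>
        ((\<lambda>s. D (\<lambda>i. s * (if i = 0 then w1 else w2)) / s) \<longlongrightarrow> L w1 w2) (at_right 0))"

definition M2 :: "(real \<Rightarrow> real \<Rightarrow> real) set" where
  "M2 = {L. \<exists>D. copula 2 D \<and> is_tdf_of L D}"

definition partial1 :: "(real \<Rightarrow> real \<Rightarrow> real) \<Rightarrow> real \<Rightarrow> real \<Rightarrow> real" where
  "partial1 L t w = deriv (\<lambda>s. L s w) t"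

definition phi :: "nat \<Rightarrow> ((nat \<Rightarrow> real) \<Rightarrow> real) \<Rightarrow> (nat \<Rightarrow> real \<Rightarrow> real \<Rightarrow> real)
                   \<Rightarrow> (nat \<Rightarrow> real) \<Rightarrow> real" where
  "phi d C L w = integral {0..} (\<lambda>t. C (\<lambda>i. partial1 (L i) t (w i)))"

end

theory Submission
  imports Defs
begin

text \<open>Put \<open>F\<^sub>i x = L\<^sub>i x w\<^sub>i\<close>. As a limit of rescaled copulas, \<open>L\<^sub>i\<close> is
  1-homogeneous, 2-increasing, nondecreasing and 1-Lipschitz; homogeneity together with
  2-increasingness gives \<open>F\<^sub>i (c * y) - F\<^sub>i (c * x) \<le> c * (F\<^sub>i y - F\<^sub>i x)\<close> for \<open>c \<ge> 1\<close>,
  which forces \<open>F\<^sub>i\<close> to be concave. Hence, off a countable set, the partial derivative in the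
  integrand of \<open>phi\<close> is the right derivative \<open>f\<^sub>i\<close> of \<open>F\<^sub>i\<close>: an antitone function with values
  in \<open>[0, 1]\<close> whose integral over \<open>[0, T]\<close> is at most \<open>F\<^sub>i T - F\<^sub>i 0 \<le> w\<^sub>i\<close>.
  The first inequality is negative quadrant dependence under the integral. For the second,
  the product of the \<open>f\<^sub>i\<close> is at most \<open>f\<^sub>k * f\<^sub>m\<close>, and since \<open>f\<^sub>k\<close> is antitone while
  \<open>0 \<le> f\<^sub>m \<le> 1\<close> has mass at most \<open>w\<^sub>m\<close>, the bathtub principle bounds the integral of
  \<open>f\<^sub>k * f\<^sub>m\<close> by that of \<open>f\<^sub>k\<close> over \<open>[0, w\<^sub>m]\<close>, i.e. by \<open>F\<^sub>k w\<^sub>m = L\<^sub>k w\<^sub>m w\<^sub>k\<close>.\<close>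

section \<open>Integrals over the half-line\<close>

lemma antimono_integrable_on:
  fixes f :: "real \<Rightarrow> real"
  assumes "antimono f"
  shows "f integrable_on {a..b}"
proof -
  have "mono_on {a..b} (\<lambda>x. - f x)"
    using assms by (auto simp: mono_on_def antimono_def)
  then have "(\<lambda>x. - (- f x)) integrable_on {a..b}"
    by (intro integrable_neg integrable_on_mono_on)
  then show ?thesis by simp
qed

lemma integrable_halfline_if_bounded:
  fixes g :: "real \<Rightarrow> real"
  assumes nonneg: "\<And>x. 0 \<le> x \<Longrightarrow> 0 \<le> g x"
    and integrable: "\<And>T. 0 \<le> T \<Longrightarrow> g integrable_on {0..T}"
    and bounded: "\<And>T. 0 \<le> T \<Longrightarrow> integral {0..T} g \<le> B"
  shows "g integrable_on {0..}" "integral {0..} g \<le> B"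
proof -
  define f where "f k x = (if x \<in> {..real k} then g x else 0)" for k :: nat and x
  have integral_f: "integral {0..} (f k) = integral {0..real k} g" for k
    unfolding f_def integral_restrict_Int by (simp add: atLeastAtMost_def Int_commute)
  have "f k integrable_on {0..}" for k
    unfolding f_def integrable_restrict_Int using integrable[of "real k"]
    by (simp add: Int_commute atLeastAtMost_def)
  moreover have "f k x \<le> f (Suc k) x" if "x \<in> {0..}" for k x
    using nonneg that by (auto simp: f_def)
  moreover have "(\<lambda>k. f k x) \<longlonglongrightarrow> g x" for x
  proof (rule tendsto_eventually)
    obtain K :: nat where "x \<le> real K" using real_arch_simple by blast
    then show "\<forall>\<^sub>F k in sequentially. f k x = g x"
      unfolding eventually_sequentially f_def by (intro exI[of _ K]) (auto intro: order_trans)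
  qed
  moreover have "bounded (range (\<lambda>k. integral {0..} (f k)))"
  proof -
    have "\<bar>integral {0..} (f k)\<bar> \<le> B" for k
    proof -
      have "0 \<le> integral {0..real k} g"
        using nonneg by (intro integral_nonneg integrable) auto
      then show ?thesis using bounded[of "real k"] unfolding integral_f by simp
    qed
    then show ?thesis unfolding bounded_iff by auto
  qed
  ultimately have lim: "g integrable_on {0..}" "(\<lambda>k. integral {0..} (f k)) \<longlonglongrightarrow> integral {0..} g"
    using monotone_convergence_increasing[of f "{0..}" g] by auto
  then show "g integrable_on {0..}" by simp
  show "integral {0..} g \<le> B"
    using lim(2) by (rule LIMSEQ_le_const2) (auto simp: integral_f intro!: exI[of _ 0] bounded)
qed

lemma bathtub_integral_le:
  fixes f g :: "real \<Rightarrow> real"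
  assumes f: "antimono f" "\<And>t. 0 \<le> f t" "f integrable_on {0..a}"
    and g: "\<And>t. 0 \<le> g t" "\<And>t. g t \<le> 1" "g integrable_on {0..}" "integral {0..} g \<le> a"
    and fg: "(\<lambda>t. f t * g t) integrable_on {0..}"
    and "0 \<le> a"
  shows "integral {0..} (\<lambda>t. f t * g t) \<le> integral {0..a} f"
proof -
  define c where "c = f a"
  define R where "R t = (if t \<le> a then f t - c else 0) + c * g t" for t
  have R: "R integrable_on {0..}" "integral {0..} R = integral {0..a} f - c * a + c * integral {0..} g"
  proof -
    have ivl: "{..a} \<inter> {0..} = {0..a}" by auto
    have "(\<lambda>t. f t - c) integrable_on {0..a}" "integral {0..a} (\<lambda>t. f t - c) = integral {0..a} f - c * a"
      using f(3) \<open>0 \<le> a\<close> by (simp_all add: integral_diff integrable_diff integrable_const_ivl)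
    then have "(\<lambda>t. if t \<in> {..a} then f t - c else 0) integrable_on {0..}"
      "integral {0..} (\<lambda>t. if t \<in> {..a} then f t - c else 0) = integral {0..a} f - c * a"
      unfolding integrable_restrict_Int integral_restrict_Int ivl .
    then show "R integrable_on {0..}" "integral {0..} R = integral {0..a} f - c * a + c * integral {0..} g"
      using g(3) integrable_cmul[OF g(3), of c] unfolding R_def atMost_iff
      by (simp_all add: integral_add integrable_add)
  qed
  \<comment> \<open>pointwise, \<open>f t * g t \<le> R t\<close> because \<open>f - c\<close> and \<open>g - 1\<close> have opposite signs left of \<open>a\<close>\<close>
  have "f t * g t \<le> R t" for t
  proof (cases "t \<le> a")
    case True
    then have "(f t - c) * (g t - 1) \<le> 0"
      using g(2)[of t] antimonoD[OF f(1) True] by (intro mult_nonneg_nonpos) (auto simp: c_def)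
    then show ?thesis using True by (simp add: R_def algebra_simps)
  next
    case False
    then have "f t * g t \<le> c * g t"
      using g(1)[of t] antimonoD[OF f(1), of a t] by (intro mult_right_mono) (auto simp: c_def)
    then show ?thesis using False by (simp add: R_def)
  qed
  then have "integral {0..} (\<lambda>t. f t * g t) \<le> integral {0..} R"
    using fg R(1) by (intro integral_le) auto
  also have "\<dots> \<le> integral {0..a} f"
    using R(2) g(4) mult_left_mono[OF g(4), of c] f(2)[of a] by (simp add: c_def)
  finally show ?thesis .
qed

section \<open>Concave nonexpansive functions on the half-line\<close>

definition slope :: "(real \<Rightarrow> real) \<Rightarrow> real \<Rightarrow> real \<Rightarrow> real" where
  "slope F x y = (F y - F x) / (y - x)"

lemma slope_combine:
  assumes "x < y" "y < z"
  shows "slope F x z = ((y - x) * slope F x y + (z - y) * slope F y z) / (z - x)"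
  using assms by (simp add: slope_def)

lemma power_bracket:
  fixes r q :: real
  assumes "1 < r" "1 \<le> q"
  obtains k where "r ^ k \<le> q" "q < r ^ Suc k"
proof -
  obtain K where "q < r ^ K" using real_arch_pow[OF assms(1)] by blast
  define k where "k = (LEAST K. q < r ^ K)"
  have k: "q < r ^ k" unfolding k_def by (rule LeastI) fact
  then have "k \<noteq> 0" using assms(2) by (metis not_less power_0)
  moreover have "\<not> q < r ^ (k - 1)"
    using \<open>k \<noteq> 0\<close> unfolding k_def by (intro not_less_Least) (simp add: k_def)
  ultimately show ?thesis using that[of "k - 1"] k by simp
qed

context
  fixes F :: "real \<Rightarrow> real"
  assumes mono: "\<And>x y. 0 \<le> x \<Longrightarrow> x \<le> y \<Longrightarrow> F x \<le> F y"
    and dilation: "\<And>x y c. 0 \<le> x \<Longrightarrow> x \<le> y \<Longrightarrow> 1 \<le> c \<Longrightarrow> F (c * y) - F (c * x) \<le> c * (F y - F x)"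
begin

lemma slope_dilation_le:
  assumes "0 \<le> x" "x < y" "1 \<le> c"
  shows "slope F (c * x) (c * y) \<le> slope F x y"
proof -
  have "(F (c * y) - F (c * x)) / c \<le> F y - F x"
    using dilation[OF assms(1) _ assms(3), of y] assms by (simp add: divide_le_eq mult.commute)
  then have "(F (c * y) - F (c * x)) / c / (y - x) \<le> (F y - F x) / (y - x)"
    using assms by (intro divide_right_mono) auto
  then show ?thesis by (simp add: slope_def right_diff_distrib[symmetric])
qed

text \<open>Dilating \<open>[t / r, t]\<close> by powers of \<open>r\<close> tiles \<open>[t, t r^n]\<close> and \<open>[t / r^k, t]\<close>; by
  \<open>slope_dilation_le\<close> the slope of \<open>F\<close> on every tile right of \<open>t\<close> is at most, and on every
  tile left of \<open>t\<close> at least, its slope on \<open>[t / r, t]\<close>.\<close>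
lemma increment_right_le:
  assumes "0 < t" "1 < r"
  shows "F (t * r ^ n) - F t \<le> (t * r ^ n - t) * slope F (t / r) t"
proof (induction n)
  case (Suc n)
  have "slope F (r ^ Suc n * (t / r)) (r ^ Suc n * t) \<le> slope F (t / r) t"
    using assms by (intro slope_dilation_le one_le_power) (auto simp: divide_less_eq)
  moreover have "r ^ Suc n * (t / r) = t * r ^ n" "r ^ Suc n * t = t * r ^ Suc n"
    using assms by auto
  moreover have "t * r ^ n < t * r ^ Suc n"
    using assms by simp
  ultimately have "F (t * r ^ Suc n) - F (t * r ^ n) \<le> (t * r ^ Suc n - t * r ^ n) * slope F (t / r) t"
    by (simp add: slope_def divide_le_eq mult.commute)
  with Suc show ?case by (simp add: algebra_simps)
qed simp

lemma increment_left_ge: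
  assumes "0 < t" "1 < r"
  shows "(t - t / r ^ k) * slope F (t / r) t \<le> F t - F (t / r ^ k)"
proof (induction k)
  case (Suc k)
  have "slope F (r ^ k * (t / r ^ Suc k)) (r ^ k * (t / r ^ k)) \<le> slope F (t / r ^ Suc k) (t / r ^ k)"
    using assms by (intro slope_dilation_le one_le_power) (auto simp: divide_strict_left_mono)
  moreover have "r ^ k * (t / r ^ Suc k) = t / r" "r ^ k * (t / r ^ k) = t"
    using assms by auto
  moreover have "t / r ^ Suc k < t / r ^ k"
    using assms by (simp add: divide_strict_left_mono)
  ultimately have "(t / r ^ k - t / r ^ Suc k) * slope F (t / r) t \<le> F (t / r ^ k) - F (t / r ^ Suc k)"
    by (simp add: slope_def le_divide_eq mult.commute)
  with Suc show ?case by (simp add: algebra_simps)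
qed simp

lemma geometric_grid_bound:
  assumes "0 < s" "s < t" "1 < r" "t * r ^ n = u" "t < u"
  shows "(t - r * s) * slope F t u \<le> F t - F s"
proof -
  obtain k where k: "r ^ k \<le> t / s" "t / s < r ^ Suc k"
    using power_bracket[OF assms(3), of "t / s"] assms by auto
  have "0 < r ^ k" using assms(3) by simp
  then have between: "s \<le> t / r ^ k" "t / r ^ k < r * s" "t / r ^ k \<le> t"
    using k assms by (auto simp: field_simps one_le_power)
  have "slope F t u \<le> slope F (t / r) t"
    using increment_right_le[of t r n] assms by (simp add: slope_def divide_le_eq mult.commute)
  moreover have "0 \<le> slope F t u"
    using mono[of t u] assms by (simp add: slope_def)
  ultimately have "(t - r * s) * slope F t u \<le> (t - t / r ^ k) * slope F (t / r) t"
    using between by (intro mult_mono) auto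
  also have "\<dots> \<le> F t - F (t / r ^ k)"
    using increment_left_ge assms by auto
  also have "\<dots> \<le> F t - F s"
    using mono[of s "t / r ^ k"] between assms by simp
  finally show ?thesis .
qed

lemma slope_antitone_if_dilations_contract:
  assumes "0 < s" "s < t" "t < u"
  shows "slope F t u \<le> slope F s t"
proof -
  \<comment> \<open>let the ratio of the grid, \<open>root n (u / t)\<close>, tend to 1\<close>
  have "((\<lambda>n. (t - root n (u / t) * s) * slope F t u) \<longlongrightarrow> (t - 1 * s) * slope F t u) sequentially"
    using assms by (intro tendsto_intros LIMSEQ_root_const) auto
  moreover have "\<forall>\<^sub>F n in sequentially. (t - root n (u / t) * s) * slope F t u \<le> F t - F s"
    using eventually_gt_at_top[of 0]
  proof eventually_elim
    case (elim n)
    then show ?case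
      using assms by (intro geometric_grid_bound[where n = n]) (auto simp: real_root_pow_pos)
  qed
  ultimately have "(t - s) * slope F t u \<le> F t - F s"
    by (simp add: tendsto_upperbound)
  then show ?thesis
    using assms by (simp add: slope_def le_divide_eq mult.commute)
qed

end

text \<open>The value 1 on \<open>(-\<infinity>, 0]\<close> is a normalisation that keeps \<open>rderiv F\<close> antitone
  with values in \<open>[0, 1]\<close> on the whole real line.\<close>
definition rderiv :: "(real \<Rightarrow> real) \<Rightarrow> real \<Rightarrow> real" where
  "rderiv F t = (if t \<le> 0 then 1 else Sup (slope F t ` {t<..}))"

definition kinks :: "(real \<Rightarrow> real) \<Rightarrow> real set" where
  "kinks F = {t. 0 < t \<and> (\<exists>e>0. \<forall>s. 0 < s \<and> s < t \<longrightarrow> rderiv F t + e \<le> slope F s t)}"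

locale concave_nonexpansive =
  fixes F :: "real \<Rightarrow> real"
  assumes increment_bounds: "0 \<le> x \<Longrightarrow> x \<le> y \<Longrightarrow> 0 \<le> F y - F x \<and> F y - F x \<le> y - x"
    and slope_antitone: "0 < s \<Longrightarrow> s < t \<Longrightarrow> t < u \<Longrightarrow> slope F t u \<le> slope F s t"
begin

lemma slope_nonneg: "0 \<le> x \<Longrightarrow> x < y \<Longrightarrow> 0 \<le> slope F x y"
  using increment_bounds[of x y] by (simp add: slope_def)

lemma slope_le_one: "0 \<le> x \<Longrightarrow> x < y \<Longrightarrow> slope F x y \<le> 1"
  using increment_bounds[of x y] by (simp add: slope_def)

lemma slope_antitone_left:
  assumes "0 < x" "x < y" "y < z"
  shows "slope F x z \<le> slope F x y"
proof -
  have "(z - y) * slope F y z \<le> (z - y) * slope F x y"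
    using slope_antitone[OF assms] assms by (intro mult_left_mono) auto
  then show ?thesis
    using slope_combine[OF assms(2,3), of F] assms by (simp add: divide_le_eq algebra_simps)
qed

lemma slope_antitone_right:
  assumes "0 < x" "x < y" "y < z"
  shows "slope F y z \<le> slope F x z"
proof -
  have "(y - x) * slope F y z \<le> (y - x) * slope F x y"
    using slope_antitone[OF assms] assms by (intro mult_left_mono) auto
  then show ?thesis
    using slope_combine[OF assms(2,3), of F] assms by (simp add: le_divide_eq algebra_simps)
qed

lemma bdd_above_slopes: "0 \<le> t \<Longrightarrow> bdd_above (slope F t ` {t<..})"
  using slope_le_one by (intro bdd_aboveI[where M = 1]) auto

lemma slope_le_rderiv: "0 < t \<Longrightarrow> t < u \<Longrightarrow> slope F t u \<le> rderiv F t"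
  unfolding rderiv_def using bdd_above_slopes[of t] by (auto intro: cSup_upper)

lemma rderiv_le_slope: "0 < s \<Longrightarrow> s < t \<Longrightarrow> rderiv F t \<le> slope F s t"
  unfolding rderiv_def using slope_antitone by (auto intro: cSup_least)

lemma rderiv_nonneg: "0 \<le> rderiv F t"
  using slope_le_rderiv[of t "t + 1"] slope_nonneg[of t "t + 1"] by (cases "t \<le> 0") (auto simp: rderiv_def)

lemma rderiv_le_one: "rderiv F t \<le> 1"
  unfolding rderiv_def using slope_le_one by (auto intro: cSup_least)

lemma antimono_rderiv: "antimono (rderiv F)"
proof (rule antimonoI)
  fix x y :: real
  assume "x \<le> y"
  then consider "x \<le> 0" | "x = y" | "0 < x" "x < y" by linarith
  then show "rderiv F y \<le> rderiv F x"
  proof cases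
    case 1
    then show ?thesis using rderiv_le_one by (simp add: rderiv_def)
  next
    case 3
    then show ?thesis using rderiv_le_slope[of x y] slope_le_rderiv[of x y] by linarith
  qed simp
qed

lemma countable_kinks: "countable (kinks F)"
proof -
  \<comment> \<open>a rational strictly between the two one-sided derivatives separates different kinks\<close>
  have "\<exists>r. r \<in> \<rat> \<and> rderiv F t < r \<and> (\<forall>s. 0 < s \<and> s < t \<longrightarrow> r < slope F s t)"
    if t: "t \<in> kinks F" for t
  proof -
    obtain e where e: "e > 0" "\<forall>s. 0 < s \<and> s < t \<longrightarrow> rderiv F t + e \<le> slope F s t"
      using t unfolding kinks_def by blast
    obtain r where "r \<in> \<rat>" "rderiv F t < r" "r < rderiv F t + e"
      using Rats_dense_in_real[of "rderiv F t" "rderiv F t + e"] e by auto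
    with e show ?thesis by force
  qed
  then obtain q where q: "\<And>t. t \<in> kinks F \<Longrightarrow>
      q t \<in> \<rat> \<and> rderiv F t < q t \<and> (\<forall>s. 0 < s \<and> s < t \<longrightarrow> q t < slope F s t)"
    by metis
  have q_less: "q y < q x" if "x \<in> kinks F" "y \<in> kinks F" "x < y" for x y
  proof -
    have "q y < slope F x y" using q[OF that(2)] that(1,3) unfolding kinks_def by auto
    also have "\<dots> \<le> rderiv F x" using slope_le_rderiv that unfolding kinks_def by auto
    also have "\<dots> < q x" using q[OF that(1)] by auto
    finally show ?thesis .
  qed
  have "inj_on q (kinks F)"
    by (rule inj_onI) (metis q_less linorder_neqE_linordered_idom less_irrefl)
  moreover have "q ` kinks F \<subseteq> \<rat>" using q by auto
  ultimately show ?thesis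
    using countable_rat countable_subset countable_image_inj_on by metis
qed

lemma has_real_derivative_rderiv:
  assumes "0 < t" "t \<notin> kinks F"
  shows "(F has_real_derivative rderiv F t) (at t)"
  unfolding has_field_derivative_iff
proof (rule tendstoI)
  fix e :: real
  assume "e > 0"
  then obtain s where s: "0 < s" "s < t" "slope F s t < rderiv F t + e"
    using assms unfolding kinks_def by (auto simp: not_le)
  have "rderiv F t - e < Sup (slope F t ` {t<..})"
    using \<open>e > 0\<close> assms(1) unfolding rderiv_def by simp
  then obtain u where u: "t < u" "rderiv F t - e < slope F t u"
    using less_cSup_iff[OF _ bdd_above_slopes] assms(1) by auto
  have "dist ((F y - F t) / (y - t)) (rderiv F t) < e" if y: "s < y" "y < u" "y \<noteq> t" for y
  proof (cases "y < t")
    case True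
    have "(F y - F t) / (y - t) = slope F y t"
      unfolding slope_def by (metis minus_diff_eq minus_divide_divide)
    moreover have "rderiv F t \<le> slope F y t" using rderiv_le_slope s y True by auto
    moreover have "slope F y t \<le> slope F s t" using slope_antitone_right s y True by auto
    ultimately show ?thesis using s(3) by (auto simp: dist_real_def)
  next
    case False
    then have "t < y" using y by auto
    moreover have "(F y - F t) / (y - t) = slope F t y" by (simp add: slope_def)
    moreover have "slope F t u \<le> slope F t y" if "y < u" using slope_antitone_left assms(1) \<open>t < y\<close> that by auto
    ultimately show ?thesis using u y slope_le_rderiv[OF assms(1)] by (auto simp: dist_real_def)
  qed
  moreover have "0 < min (t - s) (u - t)" using s u by simp
  ultimately show "\<forall>\<^sub>F y in at t. dist ((F y - F t) / (y - t)) (rderiv F t) < e"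
    unfolding eventually_at by (intro exI[of _ "min (t - s) (u - t)"]) (auto simp: dist_real_def)
qed

lemma rderiv_integrable_on: "rderiv F integrable_on {a..b}"
  using antimono_rderiv by (rule antimono_integrable_on)

lemma integral_rderiv_grid_le:
  assumes "0 \<le> h"
  shows "integral {0..(real n + 2) * h} (rderiv F) \<le> 2 * h + F ((real n + 1) * h) - F h"
proof (induction n)
  case 0
  have "integral {0..2 * h} (rderiv F) \<le> integral {0..2 * h} (\<lambda>_. 1::real)"
    using rderiv_le_one by (intro integral_le rderiv_integrable_on integrable_const_ivl) auto
  then show ?case using assms by simp
next
  case (Suc n)
  define a where "a = (real n + 2) * h"
  have "0 \<le> a" using assms by (simp add: a_def)
  then have split: "integral {0..a + h} (rderiv F) = integral {0..a} (rderiv F) + integral {a..a + h} (rderiv F)"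
    using assms by (simp add: Henstock_Kurzweil_Integration.integral_combine rderiv_integrable_on)
  \<comment> \<open>on a grid cell \<open>rderiv F\<close> is bounded by its value at the left end, which in turn
    is at most the slope of \<open>F\<close> over the preceding cell\<close>
  have "integral {a..a + h} (rderiv F) \<le> integral {a..a + h} (\<lambda>_. rderiv F a)"
    using antimono_rderiv by (intro integral_le rderiv_integrable_on integrable_const_ivl) (auto dest: antimonoD)
  also have "\<dots> = h * rderiv F a" using assms by simp
  also have "\<dots> \<le> F a - F (a - h)"
  proof (cases "h = 0")
    case False
    then have "rderiv F a \<le> slope F (a - h) a"
      using assms by (intro rderiv_le_slope) (auto simp: a_def algebra_simps add_pos_nonneg)
    then show ?thesis using False assms by (simp add: slope_def mult.commute le_divide_eq)
  qed simp
  finally show ?case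
    using Suc split by (simp add: a_def algebra_simps)
qed

lemma integral_rderiv_le_increment:
  assumes "0 \<le> T"
  shows "integral {0..T} (rderiv F) \<le> F T - F 0"
proof (rule field_le_epsilon)
  fix e :: real
  assume "e > 0"
  obtain N :: nat where N: "N > max 2 (2 * T / e)"
    using reals_Archimedean2 by blast
  define h where "h = T / real N"
  have "h \<ge> 0" "h \<le> T" "2 * h \<le> e"
    using N \<open>e > 0\<close> assms by (auto simp: h_def field_simps mult_le_cancel_left1)
  have "real (N - 2) = real N - 2" "real N * h = T"
    using N by (auto simp: h_def)
  then have "(real (N - 2) + 2) * h = T" "(real (N - 2) + 1) * h = T - h"
    by (simp_all add: algebra_simps)
  moreover have "F (T - h) \<le> F T" "F 0 \<le> F h"
    using increment_bounds[of "T - h" T] increment_bounds[of 0 h] \<open>h \<ge> 0\<close> \<open>h \<le> T\<close> by auto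
  ultimately show "integral {0..T} (rderiv F) \<le> F T - F 0 + e"
    using integral_rderiv_grid_le[OF \<open>h \<ge> 0\<close>, of "N - 2"] \<open>2 * h \<le> e\<close> by simp
qed

lemma integrable_dominated_by_rderiv:
  assumes "antimono h" "\<And>x. 0 \<le> h x" "\<And>x. h x \<le> rderiv F x"
    and bound: "\<And>T. 0 \<le> T \<Longrightarrow> F T - F 0 \<le> B"
  shows "h integrable_on {0..}" "integral {0..} h \<le> B"
proof -
  have "integral {0..T} h \<le> B" if "0 \<le> T" for T
  proof -
    have "integral {0..T} h \<le> integral {0..T} (rderiv F)"
      using assms(1,3) by (intro integral_le antimono_integrable_on rderiv_integrable_on) auto
    also have "\<dots> \<le> B" using integral_rderiv_le_increment bound that by fastforce
    finally show ?thesis .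
  qed
  then show "h integrable_on {0..}" "integral {0..} h \<le> B"
    using integrable_halfline_if_bounded[of h] assms(1,2) antimono_integrable_on by blast+
qed

end

section \<open>Copulas\<close>

text \<open>The law of the random vector behind a copula; the choice is only meaningful under
  \<open>copula d C\<close>, which provides a witness.\<close>
definition copula_law :: "nat \<Rightarrow> ((nat \<Rightarrow> real) \<Rightarrow> real) \<Rightarrow> (nat \<Rightarrow> real) measure" where
  "copula_law d C = (SOME M. prob_space M \<and> sets M = sets (PiM {..<d} (\<lambda>_. (borel :: real measure))) \<and>
     (\<forall>i<d. \<forall>t\<in>{0..1}. measure M {x \<in> space M. x i \<le> t} = t) \<and>
     (\<forall>u. (\<forall>i<d. u i \<in> {0..1}) \<longrightarrow> C u = measure M {x \<in> space M. \<forall>i<d. x i \<le> u i}))"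

context
  fixes d :: nat and C :: "(nat \<Rightarrow> real) \<Rightarrow> real"
  assumes copula: "copula d C"
begin

lemma
  shows prob_space_copula_law: "prob_space (copula_law d C)"
    and sets_copula_law: "sets (copula_law d C) = sets (PiM {..<d} (\<lambda>_. (borel :: real measure)))"
    and copula_law_margin: "\<And>i t. i < d \<Longrightarrow> t \<in> {0..1} \<Longrightarrow>
      measure (copula_law d C) {x \<in> space (copula_law d C). x i \<le> t} = t"
    and copula_eq_measure: "\<And>u. \<forall>i<d. u i \<in> {0..1} \<Longrightarrow>
      C u = measure (copula_law d C) {x \<in> space (copula_law d C). \<forall>i<d. x i \<le> u i}"
  using someI_ex[OF copula[unfolded copula_def]] unfolding copula_law_def[symmetric] by blast+

lemma coordinate_le_sets_copula_law:
  assumes "i < d"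
  shows "{x \<in> space (copula_law d C). x i \<le> t} \<in> sets (copula_law d C)"
proof -
  have "(\<lambda>x. x i) \<in> PiM {..<d} (\<lambda>_. (borel :: real measure)) \<rightarrow>\<^sub>M borel"
    using assms by simp
  then have "(\<lambda>x. x i) \<in> borel_measurable (copula_law d C)"
    by (simp add: measurable_cong_sets[OF sets_copula_law refl])
  then show ?thesis by measurable
qed

lemma lower_orthant_sets_copula_law:
  "{x \<in> space (copula_law d C). \<forall>i<d. x i \<le> u i} \<in> sets (copula_law d C)"
proof -
  have "{x \<in> space (copula_law d C). \<forall>i\<in>{..<d}. x i \<le> u i} \<in> sets (copula_law d C)"
    using coordinate_le_sets_copula_law by (intro sets.sets_Collect_finite_All) auto
  then show ?thesis by (simp only: lessThan_iff Ball_def)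
qed

lemma copula_nonneg: "\<forall>i<d. u i \<in> {0..1} \<Longrightarrow> 0 \<le> C u"
  by (simp add: copula_eq_measure)

lemma copula_mono:
  assumes "\<forall>i<d. u i \<in> {0..1}" "\<forall>i<d. v i \<in> {0..1}" "\<forall>i<d. u i \<le> v i"
  shows "C u \<le> C v"
proof -
  interpret prob_space "copula_law d C" by (rule prob_space_copula_law)
  show ?thesis
    unfolding copula_eq_measure[OF assms(1)] copula_eq_measure[OF assms(2)]
    using assms(3) by (intro finite_measure_mono lower_orthant_sets_copula_law) (auto intro: order_trans)
qed

lemma copula_le_coordinate:
  assumes "\<forall>i<d. u i \<in> {0..1}" "j < d"
  shows "C u \<le> u j"
proof -
  interpret prob_space "copula_law d C" by (rule prob_space_copula_law)
  have "C u \<le> measure (copula_law d C) {x \<in> space (copula_law d C). x j \<le> u j}"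
    unfolding copula_eq_measure[OF assms(1)]
    using assms(2) by (intro finite_measure_mono coordinate_le_sets_copula_law) auto
  then show ?thesis using copula_law_margin assms by simp
qed

end

definition bivariate :: "((nat \<Rightarrow> real) \<Rightarrow> real) \<Rightarrow> real \<Rightarrow> real \<Rightarrow> real" where
  "bivariate D a b = D (\<lambda>i. if i = 0 then a else b)"

lemma all_less_2_iff: "(\<forall>i<2. P i) \<longleftrightarrow> P 0 \<and> P (Suc 0)"
  by (auto simp: less_2_cases_iff)

context
  fixes D :: "(nat \<Rightarrow> real) \<Rightarrow> real"
  assumes copula: "copula 2 D"
begin

lemma bivariate_nonneg: "a \<in> {0..1} \<Longrightarrow> b \<in> {0..1} \<Longrightarrow> 0 \<le> bivariate D a b"
  unfolding bivariate_def by (rule copula_nonneg[OF copula]) (simp add: all_less_2_iff)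

lemma bivariate_le_fst: "a \<in> {0..1} \<Longrightarrow> b \<in> {0..1} \<Longrightarrow> bivariate D a b \<le> a"
  using copula_le_coordinate[OF copula, of "\<lambda>i. if i = 0 then a else b" 0]
  unfolding bivariate_def by (simp add: all_less_2_iff)

lemma bivariate_le_snd: "a \<in> {0..1} \<Longrightarrow> b \<in> {0..1} \<Longrightarrow> bivariate D a b \<le> b"
  using copula_le_coordinate[OF copula, of "\<lambda>i. if i = 0 then a else b" 1]
  unfolding bivariate_def by (simp add: all_less_2_iff)

lemma bivariate_mono_fst: "a \<in> {0..1} \<Longrightarrow> a' \<in> {0..1} \<Longrightarrow> b \<in> {0..1} \<Longrightarrow> a \<le> a' \<Longrightarrow>
    bivariate D a b \<le> bivariate D a' b"
  unfolding bivariate_def by (rule copula_mono[OF copula]) (auto simp: all_less_2_iff)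

lemma bivariate_eq_measure:
  "a \<in> {0..1} \<Longrightarrow> b \<in> {0..1} \<Longrightarrow>
    bivariate D a b = measure (copula_law 2 D) {x \<in> space (copula_law 2 D). x 0 \<le> a \<and> x 1 \<le> b}"
  using copula_eq_measure[OF copula] unfolding bivariate_def by (simp add: all_less_2_iff)

lemma quadrant_sets_copula_law:
  "{x \<in> space (copula_law 2 D). x 0 \<le> a \<and> x 1 \<le> b} \<in> sets (copula_law 2 D)"
  using lower_orthant_sets_copula_law[OF copula, of "\<lambda>i. if i = 0 then a else b"]
  by (simp add: all_less_2_iff)

lemma bivariate_increment_eq_measure:
  assumes "a \<in> {0..1}" "a' \<in> {0..1}" "b \<in> {0..1}" "a \<le> a'"
  shows "bivariate D a' b - bivariate D a b = measure (copula_law 2 D)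
    ({x \<in> space (copula_law 2 D). x 0 \<le> a' \<and> x 1 \<le> b} - {x \<in> space (copula_law 2 D). x 0 \<le> a \<and> x 1 \<le> b})"
proof -
  interpret prob_space "copula_law 2 D" by (rule prob_space_copula_law[OF copula])
  let ?Q = "\<lambda>a b. {x \<in> space (copula_law 2 D). x 0 \<le> a \<and> x 1 \<le> b}"
  have "?Q a b \<subseteq> ?Q a' b"
    using assms(4) by auto
  then have "measure (copula_law 2 D) (?Q a' b - ?Q a b) = measure (copula_law 2 D) (?Q a' b) - measure (copula_law 2 D) (?Q a b)"
    by (rule finite_measure_Diff[OF quadrant_sets_copula_law quadrant_sets_copula_law])
  then show ?thesis
    using assms by (simp add: bivariate_eq_measure)
qed

lemma bivariate_increment_le:
  assumes "a \<in> {0..1}" "a' \<in> {0..1}" "b \<in> {0..1}" "a \<le> a'"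
  shows "bivariate D a' b - bivariate D a b \<le> a' - a"
proof -
  let ?M = "copula_law 2 D"
  interpret prob_space ?M by (rule prob_space_copula_law[OF copula])
  have fst_sets: "{x \<in> space ?M. x 0 \<le> t} \<in> sets ?M" for t
    by (rule coordinate_le_sets_copula_law[OF copula]) simp
  have "bivariate D a' b - bivariate D a b
      \<le> measure ?M ({x \<in> space ?M. x 0 \<le> a'} - {x \<in> space ?M. x 0 \<le> a})"
    unfolding bivariate_increment_eq_measure[OF assms] by (intro finite_measure_mono sets.Diff fst_sets) auto
  also have "\<dots> = a' - a"
    using assms copula_law_margin[OF copula, of 0]
    by (simp add: finite_measure_Diff[OF fst_sets fst_sets] subset_eq)
  finally show ?thesis .
qed

lemma bivariate_2_increasing:
  assumes "a \<in> {0..1}" "a' \<in> {0..1}" "b \<in> {0..1}" "b' \<in> {0..1}" "a \<le> a'" "b \<le> b'"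
  shows "bivariate D a' b - bivariate D a b \<le> bivariate D a' b' - bivariate D a b'"
proof -
  interpret prob_space "copula_law 2 D" by (rule prob_space_copula_law[OF copula])
  show ?thesis
    unfolding bivariate_increment_eq_measure[OF assms(1-3,5)] bivariate_increment_eq_measure[OF assms(1,2,4,5)]
    using assms(6) by (intro finite_measure_mono sets.Diff quadrant_sets_copula_law) auto
qed

end

section \<open>Tail dependence functions\<close>

lemma eventually_scaled_in_unit_interval:
  fixes t :: real
  assumes "0 \<le> t"
  shows "\<forall>\<^sub>F s in at_right 0. 0 < s \<and> s * t \<in> {0..1}"
proof -
  have "((\<lambda>s. s * t) \<longlongrightarrow> 0 * t) (at_right 0)"
    by (intro tendsto_intros)
  then have "\<forall>\<^sub>F s in at_right 0. s * t < 1"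
    by (rule order_tendstoD) simp
  with eventually_at_right_less[of 0] show ?thesis
    by eventually_elim (use assms in auto)
qed

lemma tdf_tendsto:
  assumes "is_tdf_of L D" "0 \<le> t" "0 \<le> w"
  shows "((\<lambda>s. bivariate D (s * t) (s * w) / s) \<longlongrightarrow> L t w) (at_right 0)"
  using assms unfolding is_tdf_of_def bivariate_def by (simp add: if_distrib)

lemma tdf_homogeneous:
  assumes tdf: "is_tdf_of L D" and c: "0 < c" and "0 \<le> t" "0 \<le> w"
  shows "L (c * t) (c * w) = c * L t w"
proof (rule tendsto_unique[OF trivial_limit_at_right_real])
  show "((\<lambda>s. bivariate D (s * (c * t)) (s * (c * w)) / s) \<longlongrightarrow> L (c * t) (c * w)) (at_right 0)"
    using assms by (intro tdf_tendsto) auto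
  have "filterlim (\<lambda>s. c * s) (at_right 0) (at_right (0::real))"
    unfolding filterlim_at
  proof
    show "\<forall>\<^sub>F s in at_right 0. c * s \<in> {0<..} \<and> c * s \<noteq> 0"
      using eventually_at_right_less[of 0] by eventually_elim (use c in auto)
    show "((\<lambda>s. c * s) \<longlongrightarrow> 0) (at_right 0)"
      using tendsto_mult_left[OF tendsto_ident_at, of c 0 "{0<..}"] by simp
  qed
  then have "((\<lambda>s. c * (bivariate D ((c * s) * t) ((c * s) * w) / (c * s))) \<longlongrightarrow> c * L t w) (at_right 0)"
    by (intro tendsto_mult_left filterlim_compose[OF tdf_tendsto[OF assms(1,3,4)]])
  then show "((\<lambda>s. bivariate D (s * (c * t)) (s * (c * w)) / s) \<longlongrightarrow> c * L t w) (at_right 0)"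
    using c by (simp add: mult_ac)
qed

context
  fixes L :: "real \<Rightarrow> real \<Rightarrow> real" and D :: "(nat \<Rightarrow> real) \<Rightarrow> real"
  assumes copula: "copula 2 D" and tdf: "is_tdf_of L D"
begin

lemma tdf_nonneg:
  assumes "0 \<le> t" "0 \<le> w"
  shows "0 \<le> L t w"
proof (rule tendsto_lowerbound[OF tdf_tendsto[OF tdf assms]])
  show "\<forall>\<^sub>F s in at_right 0. 0 \<le> bivariate D (s * t) (s * w) / s"
    using eventually_scaled_in_unit_interval[OF assms(1)] eventually_scaled_in_unit_interval[OF assms(2)]
    by eventually_elim (simp add: bivariate_nonneg[OF copula])
qed simp

lemma tdf_le_fst:
  assumes "0 \<le> t" "0 \<le> w"
  shows "L t w \<le> t"
proof (rule tendsto_upperbound[OF tdf_tendsto[OF tdf assms]])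
  show "\<forall>\<^sub>F s in at_right 0. bivariate D (s * t) (s * w) / s \<le> t"
    using eventually_scaled_in_unit_interval[OF assms(1)] eventually_scaled_in_unit_interval[OF assms(2)]
    by eventually_elim (simp add: bivariate_le_fst[OF copula] pos_divide_le_eq mult.commute)
qed simp

lemma tdf_le_snd:
  assumes "0 \<le> t" "0 \<le> w"
  shows "L t w \<le> w"
proof (rule tendsto_upperbound[OF tdf_tendsto[OF tdf assms]])
  show "\<forall>\<^sub>F s in at_right 0. bivariate D (s * t) (s * w) / s \<le> w"
    using eventually_scaled_in_unit_interval[OF assms(1)] eventually_scaled_in_unit_interval[OF assms(2)]
    by eventually_elim (simp add: bivariate_le_snd[OF copula] pos_divide_le_eq mult.commute)
qed simp

lemma tdf_zero_fst: "0 \<le> w \<Longrightarrow> L 0 w = 0"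
  using tdf_nonneg[of 0 w] tdf_le_fst[of 0 w] by simp

lemma tdf_increment_bounds:
  assumes "0 \<le> t" "t \<le> t'" "0 \<le> w"
  shows "0 \<le> L t' w - L t w \<and> L t' w - L t w \<le> t' - t"
proof -
  have lim: "((\<lambda>s. bivariate D (s * t') (s * w) / s - bivariate D (s * t) (s * w) / s)
      \<longlongrightarrow> L t' w - L t w) (at_right 0)"
    using assms by (intro tendsto_diff tdf_tendsto[OF tdf]) auto
  have ev: "\<forall>\<^sub>F s in at_right 0. 0 \<le> bivariate D (s * t') (s * w) / s - bivariate D (s * t) (s * w) / s \<and>
      bivariate D (s * t') (s * w) / s - bivariate D (s * t) (s * w) / s \<le> t' - t"
    using eventually_scaled_in_unit_interval[OF assms(1)]
      eventually_scaled_in_unit_interval[OF order_trans[OF assms(1,2)]]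
      eventually_scaled_in_unit_interval[OF assms(3)]
  proof eventually_elim
    case (elim s)
    then have "s * t \<le> s * t'" using assms by (intro mult_left_mono) auto
    with elim have "0 \<le> bivariate D (s * t') (s * w) - bivariate D (s * t) (s * w)"
      "bivariate D (s * t') (s * w) - bivariate D (s * t) (s * w) \<le> (t' - t) * s"
      using bivariate_mono_fst[OF copula, of "s * t" "s * t'" "s * w"]
        bivariate_increment_le[OF copula, of "s * t" "s * t'" "s * w"]
      by (auto simp: algebra_simps)
    with elim show ?case
      by (simp add: diff_divide_distrib[symmetric] pos_divide_le_eq)
  qed
  show ?thesis
  proof
    show "0 \<le> L t' w - L t w"
      using ev by (intro tendsto_lowerbound[OF lim]) (auto elim: eventually_mono)
    show "L t' w - L t w \<le> t' - t"
      using ev by (intro tendsto_upperbound[OF lim]) (auto elim: eventually_mono)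
  qed
qed

lemma tdf_2_increasing:
  assumes "0 \<le> t" "t \<le> t'" "0 \<le> w" "w \<le> w'"
  shows "L t' w - L t w \<le> L t' w' - L t w'"
proof (rule tendsto_le[OF _ tendsto_diff tendsto_diff])
  show "\<forall>\<^sub>F s in at_right 0. bivariate D (s * t') (s * w) / s - bivariate D (s * t) (s * w) / s
      \<le> bivariate D (s * t') (s * w') / s - bivariate D (s * t) (s * w') / s"
    using eventually_scaled_in_unit_interval[OF assms(1)]
      eventually_scaled_in_unit_interval[OF order_trans[OF assms(1,2)]]
      eventually_scaled_in_unit_interval[OF assms(3)]
      eventually_scaled_in_unit_interval[OF order_trans[OF assms(3,4)]]
  proof eventually_elim
    case (elim s)
    then have "s * t \<le> s * t'" "s * w \<le> s * w'" using assms by (auto intro: mult_left_mono)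
    with elim show ?case
      using bivariate_2_increasing[OF copula, of "s * t" "s * t'" "s * w" "s * w'"]
      by (simp add: diff_divide_distrib[symmetric] divide_right_mono)
  qed
qed (use assms in \<open>auto intro: tdf_tendsto[OF tdf]\<close>)

lemma tdf_dilation_le:
  assumes "0 \<le> x" "x \<le> y" "1 \<le> c" "0 \<le> w"
  shows "L (c * y) w - L (c * x) w \<le> c * (L y w - L x w)"
proof -
  have "L (c * y) w - L (c * x) w = c * (L y (w / c) - L x (w / c))"
    using tdf_homogeneous[OF tdf, of c y "w / c"] tdf_homogeneous[OF tdf, of c x "w / c"] assms
    by (simp add: algebra_simps)
  also have "\<dots> \<le> c * (L y w - L x w)"
    using assms by (intro mult_left_mono tdf_2_increasing) (auto simp: divide_le_eq mult_le_cancel_left1)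
  finally show ?thesis .
qed

lemma concave_nonexpansive_tdf:
  assumes "0 \<le> w"
  shows "concave_nonexpansive (\<lambda>x. L x w)"
proof
  show "0 \<le> L y w - L x w \<and> L y w - L x w \<le> y - x" if "0 \<le> x" "x \<le> y" for x y
    using tdf_increment_bounds that assms by blast
  show "slope (\<lambda>x. L x w) t u \<le> slope (\<lambda>x. L x w) s t" if "0 < s" "s < t" "t < u" for s t u
    using that tdf_increment_bounds tdf_dilation_le assms
    by (intro slope_antitone_if_dilations_contract) auto
qed

end

section \<open>Integrals of right derivatives\<close>

lemma prod_le_prod_subset_unit_interval:
  fixes x :: "'a \<Rightarrow> real"
  assumes "finite A" "B \<subseteq> A" "\<And>i. i \<in> A \<Longrightarrow> 0 \<le> x i \<and> x i \<le> 1"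
  shows "prod x A \<le> prod x B"
proof -
  have "prod x A = prod x (A - B) * prod x B"
    using assms(2,1) by (rule prod.subset_diff)
  moreover have "prod x (A - B) \<le> 1" "0 \<le> prod x (A - B)" "0 \<le> prod x B"
    using assms by (auto intro!: prod_le_1 prod_nonneg)
  ultimately show ?thesis by (simp add: mult_left_le_one_le)
qed

context
  fixes d :: nat and F :: "nat \<Rightarrow> real \<Rightarrow> real" and v :: "real \<Rightarrow> nat \<Rightarrow> real"
  assumes profile: "\<And>i. i < d \<Longrightarrow> concave_nonexpansive (F i)"
    and v_eq: "\<And>t i. i < d \<Longrightarrow> v t i = rderiv (F i) t"
begin

lemma rderiv_vector_in_unit_cube: "\<forall>i<d. v t i \<in> {0..1}"
  using concave_nonexpansive.rderiv_nonneg[OF profile] concave_nonexpansive.rderiv_le_one[OF profile]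
  by (simp add: v_eq)

lemma rderiv_vector_antitone: "x \<le> y \<Longrightarrow> \<forall>i<d. v y i \<le> v x i"
  using concave_nonexpansive.antimono_rderiv[OF profile] by (simp add: v_eq antimonoD)

lemma indep_rderiv_le_prod:
  "B \<subseteq> {..<d} \<Longrightarrow> indep_copula d (v t) \<le> (\<Prod>i\<in>B. rderiv (F i) t)"
  unfolding indep_copula_def using rderiv_vector_in_unit_cube[of t]
  by (subst prod.cong[OF refl v_eq, symmetric]) (auto intro!: prod_le_prod_subset_unit_interval)

lemma indep_rderiv_nonneg: "0 \<le> indep_copula d (v t)"
  unfolding indep_copula_def using rderiv_vector_in_unit_cube by (auto intro: prod_nonneg)

lemma antimono_indep_rderiv: "antimono (\<lambda>t. indep_copula d (v t))"
  unfolding indep_copula_def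
  using rderiv_vector_in_unit_cube rderiv_vector_antitone
  by (intro antimonoI prod_mono) auto

lemma antimono_copula_rderiv: "copula d C \<Longrightarrow> antimono (\<lambda>t. C (v t))"
  using rderiv_vector_in_unit_cube rderiv_vector_antitone
  by (intro antimonoI copula_mono) auto

lemma integral_copula_le_indep:
  assumes copula: "copula d C" and nqd: "\<forall>u. (\<forall>i<d. u i \<in> {0..1}) \<longrightarrow> C u \<le> indep_copula d u"
    and "k < d" and bound: "\<And>T. 0 \<le> T \<Longrightarrow> F k T - F k 0 \<le> B"
  shows "integral {0..} (\<lambda>t. C (v t)) \<le> integral {0..} (\<lambda>t. indep_copula d (v t))"
proof -
  interpret k: concave_nonexpansive "F k" by (rule profile[OF \<open>k < d\<close>])
  have indep_le: "indep_copula d (v t) \<le> rderiv (F k) t" for t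
    using indep_rderiv_le_prod[of "{k}" t] \<open>k < d\<close> by simp
  have copula_le: "C (v t) \<le> indep_copula d (v t)" for t
    using nqd rderiv_vector_in_unit_cube by blast
  have "(\<lambda>t. indep_copula d (v t)) integrable_on {0..}"
    by (rule k.integrable_dominated_by_rderiv[OF antimono_indep_rderiv indep_rderiv_nonneg indep_le bound])
  moreover have "(\<lambda>t. C (v t)) integrable_on {0..}"
    using copula_nonneg[OF copula rderiv_vector_in_unit_cube] copula_le indep_le
    by (intro k.integrable_dominated_by_rderiv[OF antimono_copula_rderiv[OF copula] _ _ bound])
      (auto intro: order_trans)
  ultimately show ?thesis
    using copula_le by (intro integral_le) auto
qed

lemma integral_indep_le_increment:
  assumes "k < d" "m < d" "k \<noteq> m" "0 \<le> a" and bound: "\<And>T. 0 \<le> T \<Longrightarrow> F m T - F m 0 \<le> a"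
  shows "integral {0..} (\<lambda>t. indep_copula d (v t)) \<le> F k a - F k 0"
proof -
  interpret k: concave_nonexpansive "F k" by (rule profile[OF \<open>k < d\<close>])
  interpret m: concave_nonexpansive "F m" by (rule profile[OF \<open>m < d\<close>])
  let ?f = "rderiv (F k)" and ?g = "rderiv (F m)"
  have indep_le: "indep_copula d (v t) \<le> ?f t * ?g t" for t
    using indep_rderiv_le_prod[of "{k, m}" t] assms(1-3) by simp
  have fg_le: "?f t * ?g t \<le> ?g t" for t
    using k.rderiv_le_one k.rderiv_nonneg m.rderiv_nonneg by (simp add: mult_left_le_one_le)
  have antimono_fg: "antimono (\<lambda>t. ?f t * ?g t)"
    using k.antimono_rderiv m.antimono_rderiv k.rderiv_nonneg m.rderiv_nonneg
    by (intro antimonoI mult_mono) (auto dest: antimonoD)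
  have g: "?g integrable_on {0..}" "integral {0..} ?g \<le> a"
    using m.integrable_dominated_by_rderiv[OF m.antimono_rderiv m.rderiv_nonneg order_refl bound] by auto
  have fg: "(\<lambda>t. ?f t * ?g t) integrable_on {0..}"
    using m.integrable_dominated_by_rderiv[OF antimono_fg _ fg_le bound] k.rderiv_nonneg m.rderiv_nonneg by simp
  have "(\<lambda>t. indep_copula d (v t)) integrable_on {0..}"
    using m.integrable_dominated_by_rderiv[OF antimono_indep_rderiv indep_rderiv_nonneg _ bound]
      indep_le fg_le order_trans by blast
  then have "integral {0..} (\<lambda>t. indep_copula d (v t)) \<le> integral {0..} (\<lambda>t. ?f t * ?g t)"
    using fg indep_le by (intro integral_le) auto
  also have "\<dots> \<le> integral {0..a} ?f"
    using k.antimono_rderiv k.rderiv_nonneg k.rderiv_integrable_on m.rderiv_nonneg m.rderiv_le_one g fg \<open>0 \<le> a\<close>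
    by (rule bathtub_integral_le)
  also have "\<dots> \<le> F k a - F k 0"
    using \<open>0 \<le> a\<close> by (rule k.integral_rderiv_le_increment)
  finally show ?thesis .
qed

end

lemma phi_eq_integral_rderiv:
  assumes profile: "\<And>i. i < d \<Longrightarrow> concave_nonexpansive (\<lambda>x. L i x (w i))"
  shows "phi d X L w = integral {0..}
    (\<lambda>t. X (\<lambda>i. if i < d then rderiv (\<lambda>x. L i x (w i)) t else partial1 (L i) t (w i)))"
  unfolding phi_def
proof (rule integral_spike)
  let ?E = "insert 0 (\<Union>i<d. kinks (\<lambda>x. L i x (w i)))"
  have "countable ?E"
    using concave_nonexpansive.countable_kinks[OF profile] by auto
  then show "negligible ?E"
    using negligible_countable_Union[of "(\<lambda>x. {x}) ` ?E"] by auto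
  fix t
  assume t: "t \<in> {0..} - ?E"
  have "partial1 (L i) t (w i) = rderiv (\<lambda>x. L i x (w i)) t" if "i < d" for i
    unfolding partial1_def using t that
    by (intro DERIV_imp_deriv concave_nonexpansive.has_real_derivative_rderiv[OF profile]) auto
  then show "X (\<lambda>i. if i < d then rderiv (\<lambda>x. L i x (w i)) t else partial1 (L i) t (w i))
      = X (\<lambda>i. partial1 (L i) t (w i))"
    by (intro arg_cong[where f = X]) auto
qed

theorem mainTheorem5:
  fixes d :: nat and C :: "(nat \<Rightarrow> real) \<Rightarrow> real"
    and L :: "nat \<Rightarrow> real \<Rightarrow> real \<Rightarrow> real" and w :: "nat \<Rightarrow> real" and k :: nat
  assumes "d \<ge> 2"
    and "\<forall>i<d. L i \<in> M2"
    and "copula d C"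
    and "\<forall>u. (\<forall>i<d. u i \<in> {0..1}) \<longrightarrow> C u \<le> indep_copula d u"
    and "k < d"
    and "\<forall>i<d. w i \<ge> 0"
  shows "phi d C L w \<le> phi d (indep_copula d) L w \<and>
         phi d (indep_copula d) L w \<le> Min {L k (w m) (w k) | m. m < d \<and> m \<noteq> k}"
proof -
  have "\<forall>i<d. \<exists>D. copula 2 D \<and> is_tdf_of (L i) D"
    using assms(2) by (simp add: M2_def)
  then obtain D where D: "\<And>i. i < d \<Longrightarrow> copula 2 (D i) \<and> is_tdf_of (L i) (D i)"
    by metis
  define F where "F i x = L i x (w i)" for i x
  have profile: "concave_nonexpansive (F i)" if "i < d" for i
    unfolding F_def using D[OF that] assms(6) that by (intro concave_nonexpansive_tdf) auto
  have increment: "F i T - F i 0 \<le> w i" if "i < d" "0 \<le> T" for i T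
    unfolding F_def using tdf_le_snd[of "D i" "L i" T "w i"] tdf_zero_fst[of "D i" "L i" "w i"]
      D that assms(6) by auto
  define v where "v t i = (if i < d then rderiv (F i) t else partial1 (L i) t (w i))" for t i
  have v_eq: "v t i = rderiv (F i) t" if "i < d" for t i
    using that by (simp add: v_def)
  have phi_eq: "phi d X L w = integral {0..} (\<lambda>t. X (v t))" for X
    unfolding v_def F_def using profile[unfolded F_def] by (rule phi_eq_integral_rderiv)
  have "phi d C L w \<le> phi d (indep_copula d) L w"
    unfolding phi_eq
    using integral_copula_le_indep[of d F v, OF profile v_eq assms(3,4,5) increment[OF assms(5)]] by simp
  moreover have "phi d (indep_copula d) L w \<le> L k (w m) (w k)" if "m < d" "m \<noteq> k" for m
  proof -
    have "phi d (indep_copula d) L w \<le> F k (w m) - F k 0"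
      unfolding phi_eq using that assms(5,6) increment
      by (intro integral_indep_le_increment[of d F v, OF profile v_eq]) auto
    then show ?thesis
      using tdf_zero_fst[of "D k" "L k" "w k"] D assms(5,6) by (simp add: F_def)
  qed
  moreover have "\<exists>m<d. m \<noteq> k"
    using assms(1,5) by presburger
  then have "{L k (w m) (w k) | m. m < d \<and> m \<noteq> k} \<noteq> {}"
    by blast
  ultimately show ?thesis
    by (subst Min_ge_iff) auto
qed

end
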